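(* Let $|\text{-}|:\mathcal E\to\mathcal B$ be a concrete category over $\mathcal B$ with $\mathcal E$ non-empty, such that the $\mathcal Q_{\mathcal B}$-category $\overline{\mathcal E}$ is tensored. Then $|\text{-}|$ has a fully faithful left adjoint $L:\mathcal B\to\mathcal E$ which is a right inverse of $|\text{-}|$ (i.e. $|LT|=T$ and the unit is the identity).
   Context: $\mathcal B$ is a category with small hom-sets; a concrete category over $\mathcal B$ is a category with a faithful functor $|\text{-}|:\mathcal E\to\mathcal B$; a map $f:|X|\to|Y|$ is an $\mathcal E$-morphism if it is $|f'|$ for some $f':X\to Y$. For subsets $\mathbf f\subseteq\mathcal B(S,T)$, $\mathbf h\subseteq\mathcal B(S,U)$, put $\mathbf h\swarrow\mathbf f=\{g\in\mathcal B(T,U)\mid\forall f\in\mathbf f: g\circ f\in\mathbf h\}$. $\overline{\mathcal E}(X,Y)$ denotes the set of $\mathcal E$-morphisms $|X|\to|Y|$. $\overline{\mathcal E}$ is tensored if for all $X\in\mathrm{ob}\,\mathcal E$, $T\in\mathrm{ob}\,\mathcal B$ and all subsets $\mathbf u\subseteq\mathcal B(|X|,T)$ (including $\mathbf u=\varnothing$) there is $Y\in\mathrm{ob}\,\mathcal E$ with $|Y|=T$ and $\overline{\mathcal E}(Y,Z)=\overline{\mathcal E}(X,Z)\swarrow\mathbf u$ for all $Z\in\mathrm{ob}\,\mathcal E$. *)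

theory Defs
  imports Main
begin

text \<open>Categories with small hom-sets: objects, hom-sets (as HOL sets), composition
  (comp g f = g after f) and identities.\<close>

record ('o, 'm) cat =
  Ob :: "'o set"
  Hom :: "'o \<Rightarrow> 'o \<Rightarrow> 'm set"
  comp :: "'m \<Rightarrow> 'm \<Rightarrow> 'm"
  ident :: "'o \<Rightarrow> 'm"

definition is_category :: "('o, 'm) cat \<Rightarrow> bool" where
  "is_category C \<longleftrightarrow>
     (\<forall>X Y. (X \<notin> Ob C \<or> Y \<notin> Ob C) \<longrightarrow> Hom C X Y = {}) \<and>
     (\<forall>X Y X' Y'. Hom C X Y \<inter> Hom C X' Y' \<noteq> {} \<longrightarrow> X = X' \<and> Y = Y') \<and>
     (\<forall>X\<in>Ob C. ident C X \<in> Hom C X X) \<and>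
     (\<forall>X Y Z f g. f \<in> Hom C X Y \<longrightarrow> g \<in> Hom C Y Z \<longrightarrow> comp C g f \<in> Hom C X Z) \<and>
     (\<forall>X Y Z W f g h. f \<in> Hom C X Y \<longrightarrow> g \<in> Hom C Y Z \<longrightarrow> h \<in> Hom C Z W \<longrightarrow>
        comp C h (comp C g f) = comp C (comp C h g) f) \<and>
     (\<forall>X Y f. f \<in> Hom C X Y \<longrightarrow> comp C (ident C Y) f = f \<and> comp C f (ident C X) = f)"

definition is_functor ::
  "('o1, 'm1) cat \<Rightarrow> ('o2, 'm2) cat \<Rightarrow> ('o1 \<Rightarrow> 'o2) \<Rightarrow> ('m1 \<Rightarrow> 'm2) \<Rightarrow> bool" where
  "is_functor C D Fo Fm \<longleftrightarrow>
     (\<forall>X\<in>Ob C. Fo X \<in> Ob D) \<and>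
     (\<forall>X Y f. f \<in> Hom C X Y \<longrightarrow> Fm f \<in> Hom D (Fo X) (Fo Y)) \<and>
     (\<forall>X\<in>Ob C. Fm (ident C X) = ident D (Fo X)) \<and>
     (\<forall>X Y Z f g. f \<in> Hom C X Y \<longrightarrow> g \<in> Hom C Y Z \<longrightarrow> Fm (comp C g f) = comp D (Fm g) (Fm f))"

definition faithful ::
  "('o1, 'm1) cat \<Rightarrow> ('m1 \<Rightarrow> 'm2) \<Rightarrow> bool" where
  "faithful C Fm \<longleftrightarrow> (\<forall>X Y. inj_on Fm (Hom C X Y))"

definition fully_faithful ::
  "('o1, 'm1) cat \<Rightarrow> ('o2, 'm2) cat \<Rightarrow> ('o1 \<Rightarrow> 'o2) \<Rightarrow> ('m1 \<Rightarrow> 'm2) \<Rightarrow> bool" where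
  "fully_faithful C D Fo Fm \<longleftrightarrow>
     (\<forall>X\<in>Ob C. \<forall>Y\<in>Ob C. bij_betw Fm (Hom C X Y) (Hom D (Fo X) (Fo Y)))"

definition concrete_category ::
  "('eo, 'em) cat \<Rightarrow> ('bo, 'bm) cat \<Rightarrow> ('eo \<Rightarrow> 'bo) \<Rightarrow> ('em \<Rightarrow> 'bm) \<Rightarrow> bool" where
  "concrete_category E B Uo Um \<longleftrightarrow>
     is_category E \<and> is_category B \<and> is_functor E B Uo Um \<and> faithful E Um"

definition Ebar :: "('eo, 'em) cat \<Rightarrow> ('em \<Rightarrow> 'bm) \<Rightarrow> 'eo \<Rightarrow> 'eo \<Rightarrow> 'bm set" where
  "Ebar E Um X Y = Um ` Hom E X Y"

definition lift_set :: "('bo, 'bm) cat \<Rightarrow> 'bo \<Rightarrow> 'bo \<Rightarrow> 'bm set \<Rightarrow> 'bm set \<Rightarrow> 'bm set" where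
  "lift_set B T U h f = {g \<in> Hom B T U. \<forall>f0\<in>f. comp B g f0 \<in> h}"

definition tensored ::
  "('eo, 'em) cat \<Rightarrow> ('bo, 'bm) cat \<Rightarrow> ('eo \<Rightarrow> 'bo) \<Rightarrow> ('em \<Rightarrow> 'bm) \<Rightarrow> bool" where
  "tensored E B Uo Um \<longleftrightarrow>
     (\<forall>X\<in>Ob E. \<forall>T\<in>Ob B. \<forall>u. u \<subseteq> Hom B (Uo X) T \<longrightarrow>
        (\<exists>Y\<in>Ob E. Uo Y = T \<and>
           (\<forall>Z\<in>Ob E. Ebar E Um Y Z = lift_set B T (Uo Z) (Ebar E Um X Z) u)))"

text \<open>(Lo, Lm) : B \<rightarrow> E is left adjoint to (Uo, Um) with unit \<eta> (\<eta> T \<in> B(T, |L T|)),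
  in the universal-arrow formulation: for every f : T \<rightarrow> |X| there is a unique
  E-morphism f' : L T \<rightarrow> X with |f'| \<circ> \<eta>_T = f; and \<eta> is natural.\<close>

definition left_adjoint_with_unit ::
  "('eo, 'em) cat \<Rightarrow> ('bo, 'bm) cat \<Rightarrow> ('eo \<Rightarrow> 'bo) \<Rightarrow> ('em \<Rightarrow> 'bm)
   \<Rightarrow> ('bo \<Rightarrow> 'eo) \<Rightarrow> ('bm \<Rightarrow> 'em) \<Rightarrow> ('bo \<Rightarrow> 'bm) \<Rightarrow> bool" where
  "left_adjoint_with_unit E B Uo Um Lo Lm \<eta> \<longleftrightarrow>
     is_functor B E Lo Lm \<and>
     (\<forall>T\<in>Ob B. \<eta> T \<in> Hom B T (Uo (Lo T))) \<and>
     (\<forall>T S g. g \<in> Hom B T S \<longrightarrow> comp B (Um (Lm g)) (\<eta> T) = comp B (\<eta> S) g) \<and>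
     (\<forall>T\<in>Ob B. \<forall>X\<in>Ob E. \<forall>f\<in>Hom B T (Uo X).
        \<exists>!f'. f' \<in> Hom E (Lo T) X \<and> comp B (Um f') (\<eta> T) = f)"

end

theory Submission
  imports Defs
begin

text \<open>Tensoring an object with the empty family of maps into T produces an object D over T
  with \<open>Ebar(D, Z) = B(T, |Z|)\<close> for every Z: a discrete object, through which every map out of T
  lifts, uniquely by faithfulness. Choosing one discrete object over each T gives the left
  adjoint L; morphisms are lifted verbatim, so L is a section of |-| with identity unit, and
  full faithfulness of L is again the unique lifting property.\<close>

lemma category_hom_objects:
  assumes "is_category C" "f \<in> Hom C X Y"
  shows "X \<in> Ob C" "Y \<in> Ob C"
  using assms unfolding is_category_def by (metis empty_iff)+

lemma category_hom_determines_objects: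
  assumes "is_category C" "f \<in> Hom C X Y" "f \<in> Hom C X' Y'"
  shows "X = X' \<and> Y = Y'"
  using assms unfolding is_category_def by (metis IntI empty_iff)

lemma category_ident_in_hom:
  "is_category C \<Longrightarrow> X \<in> Ob C \<Longrightarrow> ident C X \<in> Hom C X X"
  unfolding is_category_def by blast

lemma category_comp_in_hom:
  "is_category C \<Longrightarrow> f \<in> Hom C X Y \<Longrightarrow> g \<in> Hom C Y Z \<Longrightarrow> comp C g f \<in> Hom C X Z"
  unfolding is_category_def by blast

lemma category_comp_ident:
  assumes "is_category C" "f \<in> Hom C X Y"
  shows "comp C (ident C Y) f = f" "comp C f (ident C X) = f"
  using assms unfolding is_category_def by blast+

lemma functor_in_hom:
  "is_functor C D Fo Fm \<Longrightarrow> f \<in> Hom C X Y \<Longrightarrow> Fm f \<in> Hom D (Fo X) (Fo Y)"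
  unfolding is_functor_def by blast

lemma functor_ident:
  "is_functor C D Fo Fm \<Longrightarrow> X \<in> Ob C \<Longrightarrow> Fm (ident C X) = ident D (Fo X)"
  unfolding is_functor_def by blast

lemma functor_comp:
  "is_functor C D Fo Fm \<Longrightarrow> f \<in> Hom C X Y \<Longrightarrow> g \<in> Hom C Y Z
    \<Longrightarrow> Fm (comp C g f) = comp D (Fm g) (Fm f)"
  unfolding is_functor_def by blast

lemma lift_set_empty: "lift_set B T U h {} = Hom B T U"
  unfolding lift_set_def by simp

locale concrete_over =
  fixes E :: "('eo, 'em) cat" and B :: "('bo, 'bm) cat"
    and Uo :: "'eo \<Rightarrow> 'bo" and Um :: "'em \<Rightarrow> 'bm"
  assumes concrete: "concrete_category E B Uo Um"
begin

lemma cat_E: "is_category E" and cat_B: "is_category B" and functor_U: "is_functor E B Uo Um"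
  and faithful_U: "inj_on Um (Hom E X Y)"
  using concrete unfolding concrete_category_def faithful_def by auto

definition discrete_object :: "'bo \<Rightarrow> 'eo \<Rightarrow> bool" where
  "discrete_object T Y \<longleftrightarrow> Y \<in> Ob E \<and> Uo Y = T \<and> (\<forall>Z\<in>Ob E. Ebar E Um Y Z = Hom B T (Uo Z))"

lemma tensored_discrete_object_exists:
  assumes "tensored E B Uo Um" "Ob E \<noteq> {}" "T \<in> Ob B"
  shows "\<exists>Y. discrete_object T Y"
proof -
  obtain X where "X \<in> Ob E" using assms(2) by blast
  with assms(1,3) obtain Y where "Y \<in> Ob E" "Uo Y = T"
    "\<forall>Z\<in>Ob E. Ebar E Um Y Z = lift_set B T (Uo Z) (Ebar E Um X Z) {}"
    unfolding tensored_def by (metis empty_subsetI)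
  then show ?thesis unfolding discrete_object_def lift_set_empty by blast
qed

lemma discrete_object_unique_lift:
  assumes "discrete_object T Y" "Z \<in> Ob E" "f \<in> Hom B T (Uo Z)"
  shows "\<exists>!f'. f' \<in> Hom E Y Z \<and> Um f' = f"
proof (rule ex_ex1I)
  show "\<exists>f'. f' \<in> Hom E Y Z \<and> Um f' = f"
    using assms unfolding discrete_object_def Ebar_def by (metis imageE)
next
  show "f1 = f2" if "f1 \<in> Hom E Y Z \<and> Um f1 = f" "f2 \<in> Hom E Y Z \<and> Um f2 = f" for f1 f2
    using faithful_U[of Y Z] that by (metis inj_onD)
qed

end

locale discrete_choice = concrete_over +
  fixes Lo
  assumes discrete_Lo: "T \<in> Ob B \<Longrightarrow> discrete_object T (Lo T)"
begin

lemma Lo_in_Ob: "T \<in> Ob B \<Longrightarrow> Lo T \<in> Ob E"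
  and Uo_Lo: "T \<in> Ob B \<Longrightarrow> Uo (Lo T) = T"
  using discrete_Lo unfolding discrete_object_def by auto

lemma Lo_unique_lift:
  "T \<in> Ob B \<Longrightarrow> X \<in> Ob E \<Longrightarrow> f \<in> Hom B T (Uo X) \<Longrightarrow> \<exists>!f'. f' \<in> Hom E (Lo T) X \<and> Um f' = f"
  using discrete_Lo discrete_object_unique_lift by blast

text \<open>Hom-sets of B are disjoint, so g determines T and S.\<close>

definition Lm where
  "Lm g = (SOME f'. \<exists>T S. g \<in> Hom B T S \<and> f' \<in> Hom E (Lo T) (Lo S) \<and> Um f' = g)"

lemma Lm_lifts:
  assumes g: "g \<in> Hom B T S"
  shows "Lm g \<in> Hom E (Lo T) (Lo S) \<and> Um (Lm g) = g"
proof -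
  have T: "T \<in> Ob B" and S: "S \<in> Ob B"
    using category_hom_objects[OF cat_B g] by auto
  with g obtain f' where "f' \<in> Hom E (Lo T) (Lo S)" "Um f' = g"
    using Lo_unique_lift[OF T Lo_in_Ob[OF S]] Uo_Lo by metis
  with g have "\<exists>f'. \<exists>T S. g \<in> Hom B T S \<and> f' \<in> Hom E (Lo T) (Lo S) \<and> Um f' = g"
    by blast
  then have "\<exists>T S. g \<in> Hom B T S \<and> Lm g \<in> Hom E (Lo T) (Lo S) \<and> Um (Lm g) = g"
    unfolding Lm_def by (rule someI_ex)
  then show ?thesis
    using category_hom_determines_objects[OF cat_B g] by blast
qed

lemma Lm_in_hom: "g \<in> Hom B T S \<Longrightarrow> Lm g \<in> Hom E (Lo T) (Lo S)"
  and Um_Lm: "g \<in> Hom B T S \<Longrightarrow> Um (Lm g) = g"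
  using Lm_lifts by blast+

lemma Lm_Um:
  assumes h: "h \<in> Hom E (Lo T) (Lo S)" and T: "T \<in> Ob B" and S: "S \<in> Ob B"
  shows "Lm (Um h) = h"
proof -
  have Uh: "Um h \<in> Hom B T S"
    using functor_in_hom[OF functor_U h] Uo_Lo T S by simp
  show ?thesis
    using Lo_unique_lift[OF T Lo_in_Ob[OF S]] Uo_Lo[OF S] Uh h Lm_in_hom[OF Uh] Um_Lm[OF Uh]
    by metis
qed

lemma functor_L: "is_functor B E Lo Lm"
  unfolding is_functor_def
proof (intro conjI allI ballI impI)
  fix T assume T: "T \<in> Ob B"
  then show "Lo T \<in> Ob E" by (rule Lo_in_Ob)
  have "Um (ident E (Lo T)) = ident B T"
    using functor_ident[OF functor_U Lo_in_Ob[OF T]] Uo_Lo[OF T] by simp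
  then show "Lm (ident B T) = ident E (Lo T)"
    using Lm_Um[OF category_ident_in_hom[OF cat_E Lo_in_Ob[OF T]] T T] by simp
next
  fix T S g assume "g \<in> Hom B T S"
  then show "Lm g \<in> Hom E (Lo T) (Lo S)" by (rule Lm_in_hom)
next
  fix T S R f g assume f: "f \<in> Hom B T S" and g: "g \<in> Hom B S R"
  have Lgf: "comp E (Lm g) (Lm f) \<in> Hom E (Lo T) (Lo R)"
    using category_comp_in_hom[OF cat_E Lm_in_hom[OF f] Lm_in_hom[OF g]] .
  have "Um (comp E (Lm g) (Lm f)) = comp B g f"
    using functor_comp[OF functor_U Lm_in_hom[OF f] Lm_in_hom[OF g]] Um_Lm f g by simp
  then show "Lm (comp B g f) = comp E (Lm g) (Lm f)"
    using Lm_Um[OF Lgf] category_hom_objects[OF cat_B f] category_hom_objects[OF cat_B g]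
    by simp
qed

lemma left_adjoint_L: "left_adjoint_with_unit E B Uo Um Lo Lm (ident B)"
  unfolding left_adjoint_with_unit_def
proof (intro conjI functor_L ballI allI impI)
  fix T assume "T \<in> Ob B"
  then show "ident B T \<in> Hom B T (Uo (Lo T))"
    using category_ident_in_hom[OF cat_B] Uo_Lo by simp
next
  fix T S g assume g: "g \<in> Hom B T S"
  then show "comp B (Um (Lm g)) (ident B T) = comp B (ident B S) g"
    using Um_Lm category_comp_ident[OF cat_B g] by simp
next
  fix T X f assume T: "T \<in> Ob B" and X: "X \<in> Ob E" and f: "f \<in> Hom B T (Uo X)"
  have "comp B (Um f') (ident B T) = Um f'" if "f' \<in> Hom E (Lo T) X" for f'
    using category_comp_ident(2)[OF cat_B functor_in_hom[OF functor_U that]] Uo_Lo[OF T] by simp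
  then show "\<exists>!f'. f' \<in> Hom E (Lo T) X \<and> comp B (Um f') (ident B T) = f"
    using Lo_unique_lift[OF T X f] by (metis (no_types, lifting))
qed

lemma fully_faithful_L: "fully_faithful B E Lo Lm"
  unfolding fully_faithful_def
proof (intro ballI)
  fix T S assume T: "T \<in> Ob B" and S: "S \<in> Ob B"
  show "bij_betw Lm (Hom B T S) (Hom E (Lo T) (Lo S))"
  proof (rule bij_betw_byWitness[where f' = Um])
    show "\<forall>g\<in>Hom B T S. Um (Lm g) = g" using Um_Lm by blast
    show "\<forall>h\<in>Hom E (Lo T) (Lo S). Lm (Um h) = h" using Lm_Um T S by blast
    show "Lm ` Hom B T S \<subseteq> Hom E (Lo T) (Lo S)" using Lm_in_hom by blast
    show "Um ` Hom E (Lo T) (Lo S) \<subseteq> Hom B T S"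
      using functor_in_hom[OF functor_U] Uo_Lo T S by fastforce
  qed
qed

end

theorem corollary4p4:
  fixes E :: "('eo, 'em) cat" and B :: "('bo, 'bm) cat"
    and Uo :: "'eo \<Rightarrow> 'bo" and Um :: "'em \<Rightarrow> 'bm"
  assumes "concrete_category E B Uo Um"
    and "Ob E \<noteq> {}"
    and "tensored E B Uo Um"
  shows "\<exists>Lo Lm. left_adjoint_with_unit E B Uo Um Lo Lm (ident B)
            \<and> fully_faithful B E Lo Lm
            \<and> (\<forall>T\<in>Ob B. Uo (Lo T) = T)
            \<and> (\<forall>T S g. g \<in> Hom B T S \<longrightarrow> Um (Lm g) = g)"
proof -
  interpret concrete_over E B Uo Um by (rule concrete_over.intro) (fact assms(1))
  obtain Lo where "\<And>T. T \<in> Ob B \<Longrightarrow> discrete_object T (Lo T)"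
    using tensored_discrete_object_exists[OF assms(3,2)] by metis
  then interpret discrete_choice E B Uo Um Lo
    by unfold_locales
  show ?thesis
    using left_adjoint_L fully_faithful_L Uo_Lo Um_Lm by blast
qed

end
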